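(* In the setting of the context, suppose $G$ is an anchor subgraph and: (a) edges are $r$-driven; (b) the $T_r$ are independent Bernoulli random variables with probability $p\in(0,1)$; (c) $\{(a,r)\mid u_{ar}\neq0\}\subset G$; (d) $c_{ar}=\mathbb I((a,r)\in G)$; (e) $w_{ar}\neq0$ for all $(a,r)$; (f) $|\{r\mid u_{ar}\neq0\}|>0$ for all $a$. Then for every $a\in\mathcal A$, $$\mathrm{Cov}\left(\widehat{\mathcal W_a(\mathbf 1)}^c,\hat\beta^u_a\right)=0.$$
   Context: Setting (endogenous bipartite interference graph). $\mathcal A$ is a set of $n_a$ analysis units, $\mathcal R$ a set of $n_r$ randomization units. A random treatment vector $\mathbf T=(T_r)_{r\in\mathcal R}\in\{0,1\}^{n_r}$ is assigned; all randomness comes from $\mathbf T$. For each $(a,r)$ there is an unknown edge potential outcome function $E_{ar}:\{0,1\}^{n_r}\to\{0,1\}$ with observed realization $e_{ar}=E_{ar}(\mathbf T)$. Edges are $r$-driven if each $E_{ar}(\mathbf T)$ depends on $\mathbf T$ only through $T_r$. An anchor subgraph is a set $G\subset\mathcal A\times\mathcal R$ with $E_{ar}(\mathbf T)=1$ for all $\mathbf T$ and all $(a,r)\in G$. Outcome model: known real weights $w_{ar}$; $y_a=Y_a(\mathbf T)=\alpha_a+\beta_ax_a$, $x_a=\sum_rT_rE_{ar}(\mathbf T)w_{ar}$, unknown constants $\alpha_a,\beta_a$. Estimators: for fixed real weights $u_{ar},c_{ar}$, $z^u_a=\sum_rT_ru_{ar}$, $\hat\beta^u_a=y_a(z^u_a-\mathbb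 Ez^u_a)/\mathrm{Cov}(x_a,z^u_a)$, $\widehat{\mathcal W_a(\mathbf 1)}^c=\sum_r\left[\frac{T_rw_{ar}(e_{ar}-c_{ar})}{p}+w_{ar}c_{ar}\right]$. *)

theory Defs
  imports "HOL-Probability.Probability"
begin

text \<open>Treatment vectors T : R -> {0,1} are modelled as functions 'r => bool that are
  False outside the finite set R of randomization units.\<close>

definition treatments :: "'r set \<Rightarrow> ('r \<Rightarrow> bool) set" where
  "treatments R = {T. \<forall>r. r \<notin> R \<longrightarrow> \<not> T r}"

definition bern_design :: "'r set \<Rightarrow> real \<Rightarrow> ('r \<Rightarrow> bool) pmf" where
  "bern_design R p = Pi_pmf R False (\<lambda>_. bernoulli_pmf p)"

definition Ex :: "'t pmf \<Rightarrow> ('t \<Rightarrow> real) \<Rightarrow> real" where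
  "Ex M X = measure_pmf.expectation M X"

definition Cov :: "'t pmf \<Rightarrow> ('t \<Rightarrow> real) \<Rightarrow> ('t \<Rightarrow> real) \<Rightarrow> real" where
  "Cov M X Y = Ex M (\<lambda>t. (X t - Ex M X) * (Y t - Ex M Y))"

definition r_driven :: "'a set \<Rightarrow> 'r set \<Rightarrow> ('a \<Rightarrow> 'r \<Rightarrow> ('r \<Rightarrow> bool) \<Rightarrow> bool) \<Rightarrow> bool" where
  "r_driven A R E \<longleftrightarrow> (\<forall>a\<in>A. \<forall>r\<in>R. \<forall>T\<in>treatments R. \<forall>T'\<in>treatments R.
      T r = T' r \<longrightarrow> E a r T = E a r T')"

definition anchor_subgraph :: "'a set \<Rightarrow> 'r set \<Rightarrow> ('a \<Rightarrow> 'r \<Rightarrow> ('r \<Rightarrow> bool) \<Rightarrow> bool) \<Rightarrow> ('a \<times> 'r) set \<Rightarrow> bool" where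
  "anchor_subgraph A R E G \<longleftrightarrow> G \<subseteq> A \<times> R \<and> (\<forall>(a,r)\<in>G. \<forall>T\<in>treatments R. E a r T)"

definition exposure :: "'r set \<Rightarrow> ('a \<Rightarrow> 'r \<Rightarrow> ('r \<Rightarrow> bool) \<Rightarrow> bool) \<Rightarrow> ('a \<Rightarrow> 'r \<Rightarrow> real) \<Rightarrow> 'a \<Rightarrow> ('r \<Rightarrow> bool) \<Rightarrow> real" where
  "exposure R E w a T = (\<Sum>r\<in>R. of_bool (T r) * of_bool (E a r T) * w a r)"

definition outcome :: "'r set \<Rightarrow> ('a \<Rightarrow> 'r \<Rightarrow> ('r \<Rightarrow> bool) \<Rightarrow> bool) \<Rightarrow> ('a \<Rightarrow> 'r \<Rightarrow> real) \<Rightarrow> ('a \<Rightarrow> real) \<Rightarrow> ('a \<Rightarrow> real) \<Rightarrow> 'a \<Rightarrow> ('r \<Rightarrow> bool) \<Rightarrow> real" where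
  "outcome R E w \<alpha> \<beta> a T = \<alpha> a + \<beta> a * exposure R E w a T"

definition zu :: "'r set \<Rightarrow> ('a \<Rightarrow> 'r \<Rightarrow> real) \<Rightarrow> 'a \<Rightarrow> ('r \<Rightarrow> bool) \<Rightarrow> real" where
  "zu R u a T = (\<Sum>r\<in>R. of_bool (T r) * u a r)"

definition beta_hat :: "'r set \<Rightarrow> real \<Rightarrow> ('a \<Rightarrow> 'r \<Rightarrow> ('r \<Rightarrow> bool) \<Rightarrow> bool) \<Rightarrow> ('a \<Rightarrow> 'r \<Rightarrow> real) \<Rightarrow> ('a \<Rightarrow> real) \<Rightarrow> ('a \<Rightarrow> real) \<Rightarrow> ('a \<Rightarrow> 'r \<Rightarrow> real) \<Rightarrow> 'a \<Rightarrow> ('r \<Rightarrow> bool) \<Rightarrow> real" where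
  "beta_hat R p E w \<alpha> \<beta> u a T =
     outcome R E w \<alpha> \<beta> a T * (zu R u a T - Ex (bern_design R p) (zu R u a))
     / Cov (bern_design R p) (exposure R E w a) (zu R u a)"

definition W_hat :: "'r set \<Rightarrow> real \<Rightarrow> ('a \<Rightarrow> 'r \<Rightarrow> ('r \<Rightarrow> bool) \<Rightarrow> bool) \<Rightarrow> ('a \<Rightarrow> 'r \<Rightarrow> real) \<Rightarrow> ('a \<Rightarrow> 'r \<Rightarrow> real) \<Rightarrow> 'a \<Rightarrow> ('r \<Rightarrow> bool) \<Rightarrow> real" where
  "W_hat R p E w c a T =
     (\<Sum>r\<in>R. of_bool (T r) * w a r * (of_bool (E a r T) - c a r) / p + w a r * c a r)"

end

theory Submission imports Defs begin

text \<open>Let S = {r. (a, r) \<in> G} and N = R - S. Since u vanishes off S, z^u_a is a function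
  of T|S. On S the edges are always present and c = 1, so those terms of the W-estimator are
  constant; on N we have c = 0 and, the edges being r-driven, T_r e_ar = T_r E_ar(1_r), so the
  rest of the W-estimator is a function of T|N. Splitting x_a = x_S + x_N in the same way gives
  beta-hat = (z - E z) ((alpha + beta x_S) + beta x_N) / Cov(x_a, z). As T|S and T|N are
  independent, and both z - E z and the centred W-estimator have mean zero, every term of the
  covariance vanishes.\<close>

definition depends_only_on :: "'i set \<Rightarrow> (('i \<Rightarrow> 'x) \<Rightarrow> 'b) \<Rightarrow> bool" where
  "depends_only_on S f \<longleftrightarrow> (\<forall>T T'. (\<forall>r\<in>S. T r = T' r) \<longrightarrow> f T = f T')"

lemma depends_only_on_compose:
  "depends_only_on S f \<Longrightarrow> depends_only_on S (\<lambda>T. h (f T))"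
  unfolding depends_only_on_def by metis

lemma depends_only_on_compose2:
  "depends_only_on S f \<Longrightarrow> depends_only_on S g \<Longrightarrow> depends_only_on S (\<lambda>T. h (f T) (g T))"
  unfolding depends_only_on_def by metis

lemma Ex_cong: "(\<And>x. x \<in> set_pmf M \<Longrightarrow> f x = g x) \<Longrightarrow> Ex M f = Ex M g"
  unfolding Ex_def by (intro integral_cong_AE) (auto intro: AE_pmfI)

lemma Cov_cong:
  "(\<And>x. x \<in> set_pmf M \<Longrightarrow> X x = X' x) \<Longrightarrow> (\<And>x. x \<in> set_pmf M \<Longrightarrow> Y x = Y' x)
    \<Longrightarrow> Cov M X Y = Cov M X' Y'"
  unfolding Cov_def by (intro Ex_cong) (simp add: Ex_cong[of M X X'] Ex_cong[of M Y Y'])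

lemma Ex_const [simp]: "Ex M (\<lambda>_. c) = c"
  unfolding Ex_def by simp

lemma Ex_add: "finite (set_pmf M) \<Longrightarrow> Ex M (\<lambda>x. f x + g x) = Ex M f + Ex M g"
  unfolding Ex_def by (simp add: integrable_measure_pmf_finite)

lemma Ex_diff: "finite (set_pmf M) \<Longrightarrow> Ex M (\<lambda>x. f x - g x) = Ex M f - Ex M g"
  unfolding Ex_def by (simp add: integrable_measure_pmf_finite)

lemma Ex_cmult: "Ex M (\<lambda>x. c * f x) = c * Ex M f"
  unfolding Ex_def by simp

lemma expectation_pair_pmf_mult:
  fixes f :: "'x \<Rightarrow> real" and g :: "'y \<Rightarrow> real"
  assumes "finite (set_pmf P)" "finite (set_pmf Q)"
  shows "measure_pmf.expectation (pair_pmf P Q) (\<lambda>z. f (fst z) * g (snd z))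
     = measure_pmf.expectation P f * measure_pmf.expectation Q g"
proof -
  have "measure_pmf.expectation (pair_pmf P Q) (\<lambda>z. f (fst z) * g (snd z))
     = (\<Sum>z\<in>set_pmf P \<times> set_pmf Q. f (fst z) * g (snd z) * pmf (pair_pmf P Q) z)"
    using assms by (intro integral_measure_pmf_real) auto
  also have "\<dots> = (\<Sum>x\<in>set_pmf P. \<Sum>y\<in>set_pmf Q. f x * g y * pmf (pair_pmf P Q) (x, y))"
    by (simp add: sum.cartesian_product split_def)
  also have "\<dots> = (\<Sum>x\<in>set_pmf P. \<Sum>y\<in>set_pmf Q. (f x * pmf P x) * (g y * pmf Q y))"
    by (simp add: pmf_pair mult_ac)
  also have "\<dots> = (\<Sum>x\<in>set_pmf P. f x * pmf P x) * (\<Sum>y\<in>set_pmf Q. g y * pmf Q y)"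
    by (simp add: sum_product)
  also have "\<dots> = measure_pmf.expectation P f * measure_pmf.expectation Q g"
    using assms by (simp add: integral_measure_pmf_real)
  finally show ?thesis .
qed

lemma finite_set_Pi_pmf_bool:
  "finite R \<Longrightarrow> finite (set_pmf (Pi_pmf R d (P :: 'i \<Rightarrow> bool pmf)))"
  by (subst set_Pi_pmf) auto

lemma Ex_Pi_pmf_mult_blocks:
  fixes f g :: "('i \<Rightarrow> bool) \<Rightarrow> real"
  assumes "finite R" "S \<subseteq> R"
    and f: "depends_only_on S f" and g: "depends_only_on (R - S) g"
  shows "Ex (Pi_pmf R d P) (\<lambda>T. f T * g T) = Ex (Pi_pmf R d P) f * Ex (Pi_pmf R d P) g"
proof -
  have fin: "finite S" "finite (R - S)"
    using assms(1,2) finite_subset by auto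
  define merge where "merge = (\<lambda>(x :: 'i \<Rightarrow> bool, y) r. if r \<in> S then x r else y r)"
  define Q where "Q = pair_pmf (Pi_pmf S d P) (Pi_pmf (R - S) d P)"
  have "Pi_pmf R d P = Pi_pmf (S \<union> (R - S)) d P"
    using assms(2) by (simp add: Un_absorb1)
  also have "\<dots> = map_pmf merge Q"
    unfolding merge_def Q_def by (rule Pi_pmf_union[OF fin]) auto
  finally have split: "Pi_pmf R d P = map_pmf merge Q" .
  have f_merge: "f (merge z) = f (fst z)" for z
    using f by (cases z) (auto simp: merge_def depends_only_on_def)
  have g_merge: "g (merge z) = g (snd z)" for z
    using g by (cases z) (auto simp: merge_def depends_only_on_def)
  show ?thesis
    unfolding Ex_def split
    using expectation_pair_pmf_mult[OF finite_set_Pi_pmf_bool finite_set_Pi_pmf_bool, OF fin]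
    by (simp add: f_merge g_merge Q_def)
qed

lemma Cov_Pi_pmf_blocks_eq_0:
  fixes X F H Z :: "('i \<Rightarrow> bool) \<Rightarrow> real"
  assumes "finite R" "S \<subseteq> R"
    and X: "depends_only_on (R - S) X"
    and Z: "depends_only_on S Z" and F: "depends_only_on S F" and H: "depends_only_on (R - S) H"
  shows "Cov (Pi_pmf R d P) X (\<lambda>T. (Z T - Ex (Pi_pmf R d P) Z) * (F T + H T)) = 0"
proof -
  define M where "M = Pi_pmf R d P"
  define D where "D T = X T - Ex M X" for T
  define Z\<^sub>0 where "Z\<^sub>0 T = Z T - Ex M Z" for T
  have fin: "finite (set_pmf M)"
    unfolding M_def using assms(1) by (rule finite_set_Pi_pmf_bool)
  have D_centred: "Ex M D = 0" and Z\<^sub>0_centred: "Ex M Z\<^sub>0 = 0"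
    unfolding D_def Z\<^sub>0_def using fin by (simp_all add: Ex_diff)
  have D: "depends_only_on (R - S) D"
    unfolding D_def using X by (rule depends_only_on_compose)
  have Z\<^sub>0: "depends_only_on S Z\<^sub>0"
    unfolding Z\<^sub>0_def using Z by (rule depends_only_on_compose)
  have indep: "Ex M (\<lambda>T. f T * g T) = Ex M f * Ex M g"
    if "depends_only_on S f" "depends_only_on (R - S) g" for f g :: "('i \<Rightarrow> bool) \<Rightarrow> real"
    unfolding M_def by (rule Ex_Pi_pmf_mult_blocks[OF assms(1,2) that])
  have "Ex M (\<lambda>T. Z\<^sub>0 T * F T * D T) = 0"
    using depends_only_on_compose2[OF Z\<^sub>0 F, of "(*)"] D D_centred by (simp add: indep)
  moreover have "Ex M (\<lambda>T. Z\<^sub>0 T * (D T * H T)) = 0"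
    using Z\<^sub>0 depends_only_on_compose2[OF D H, of "(*)"] Z\<^sub>0_centred by (simp add: indep)
  moreover have "(\<lambda>T. D T * (Z\<^sub>0 T * (F T + H T))) = (\<lambda>T. Z\<^sub>0 T * F T * D T + Z\<^sub>0 T * (D T * H T))"
    by (simp add: fun_eq_iff algebra_simps)
  ultimately have DY: "Ex M (\<lambda>T. D T * (Z\<^sub>0 T * (F T + H T))) = 0"
    using fin by (simp add: Ex_add)
  have "Cov M X (\<lambda>T. Z\<^sub>0 T * (F T + H T))
      = Ex M (\<lambda>T. D T * (Z\<^sub>0 T * (F T + H T)) - Ex M (\<lambda>T. Z\<^sub>0 T * (F T + H T)) * D T)"
    unfolding Cov_def D_def by (simp add: right_diff_distrib mult.commute)
  also have "\<dots> = 0"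
    using fin D_centred DY by (simp add: Ex_diff Ex_cmult)
  finally show ?thesis
    by (simp add: M_def Z\<^sub>0_def)
qed

lemma set_pmf_bern_design: "finite R \<Longrightarrow> set_pmf (bern_design R p) \<subseteq> treatments R"
  unfolding bern_design_def treatments_def using set_Pi_pmf_subset by fastforce

lemma anchor_subgraph_edge:
  "anchor_subgraph A R E G \<Longrightarrow> (a, r) \<in> G \<Longrightarrow> T \<in> treatments R \<Longrightarrow> E a r T"
  unfolding anchor_subgraph_def by auto

lemma r_driven_treated_edge:
  assumes driven: "r_driven A R E" and "a \<in> A" "r \<in> R" "T \<in> treatments R"
  shows "of_bool (T r) * of_bool (E a r T) = (of_bool (T r) * of_bool (E a r (\<lambda>s. s = r)) :: real)"
proof (cases "T r")
  case True
  have "(\<lambda>s. s = r) \<in> treatments R"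
    using \<open>r \<in> R\<close> by (auto simp: treatments_def)
  with True have "E a r T = E a r (\<lambda>s. s = r)"
    using driven[unfolded r_driven_def, rule_format, OF \<open>a \<in> A\<close> \<open>r \<in> R\<close> \<open>T \<in> treatments R\<close>]
    by simp
  then show ?thesis by simp
qed simp

lemma exposure_anchored_split:
  assumes S_def: "S = {r \<in> R. (a, r) \<in> G}" and "finite R"
    and anchor: "anchor_subgraph A R E G" and driven: "r_driven A R E" and "a \<in> A" "T \<in> treatments R"
  shows "exposure R E w a T = (\<Sum>r\<in>S. of_bool (T r) * w a r)
    + (\<Sum>r\<in>R - S. of_bool (T r) * of_bool (E a r (\<lambda>s. s = r)) * w a r)"
proof -
  have "exposure R E w a T = (\<Sum>r\<in>R - S. of_bool (T r) * of_bool (E a r T) * w a r)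
      + (\<Sum>r\<in>S. of_bool (T r) * of_bool (E a r T) * w a r)"
    unfolding exposure_def by (rule sum.subset_diff) (auto simp: S_def \<open>finite R\<close>)
  also have "(\<Sum>r\<in>S. of_bool (T r) * of_bool (E a r T) * w a r) = (\<Sum>r\<in>S. of_bool (T r) * w a r)"
    using anchor_subgraph_edge[OF anchor _ \<open>T \<in> treatments R\<close>] by (intro sum.cong) (auto simp: S_def)
  also have "(\<Sum>r\<in>R - S. of_bool (T r) * of_bool (E a r T) * w a r)
      = (\<Sum>r\<in>R - S. of_bool (T r) * of_bool (E a r (\<lambda>s. s = r)) * w a r)"
    using r_driven_treated_edge[OF driven \<open>a \<in> A\<close> _ \<open>T \<in> treatments R\<close>] by (intro sum.cong) auto
  finally show ?thesis by simp
qed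

lemma W_hat_anchored_split:
  assumes S_def: "S = {r \<in> R. (a, r) \<in> G}" and "finite R"
    and anchor: "anchor_subgraph A R E G" and driven: "r_driven A R E" and "a \<in> A" "T \<in> treatments R" and c: "\<forall>r\<in>R. c a r = of_bool ((a, r) \<in> G)"
  shows "W_hat R p E w c a T = (\<Sum>r\<in>S. w a r)
    + (\<Sum>r\<in>R - S. of_bool (T r) * of_bool (E a r (\<lambda>s. s = r)) * w a r) / p"
proof -
  define t where "t r = of_bool (T r) * w a r * (of_bool (E a r T) - c a r) / p + w a r * c a r" for r
  have "W_hat R p E w c a T = sum t (R - S) + sum t S"
    unfolding W_hat_def t_def by (rule sum.subset_diff) (auto simp: S_def \<open>finite R\<close>)
  also have "sum t S = (\<Sum>r\<in>S. w a r)"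
    using anchor_subgraph_edge[OF anchor _ \<open>T \<in> treatments R\<close>] c
    by (intro sum.cong) (auto simp: S_def t_def)
  also have "sum t (R - S) = (\<Sum>r\<in>R - S. of_bool (T r) * of_bool (E a r T) * w a r / p)"
    using c by (intro sum.cong) (auto simp: S_def t_def)
  also have "\<dots> = (\<Sum>r\<in>R - S. of_bool (T r) * of_bool (E a r (\<lambda>s. s = r)) * w a r / p)"
    using r_driven_treated_edge[OF driven \<open>a \<in> A\<close> _ \<open>T \<in> treatments R\<close>]
    by (intro sum.cong) auto
  also have "\<dots> = (\<Sum>r\<in>R - S. of_bool (T r) * of_bool (E a r (\<lambda>s. s = r)) * w a r) / p"
    by (simp add: sum_divide_distrib)
  finally show ?thesis by simp
qed

lemma zu_anchored:
  assumes "S = {r \<in> R. (a, r) \<in> G}" "finite R" "\<forall>r\<in>R. u a r \<noteq> 0 \<longrightarrow> (a, r) \<in> G"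
  shows "zu R u a T = (\<Sum>r\<in>S. of_bool (T r) * u a r)"
  unfolding zu_def using assms by (intro sum.mono_neutral_right) auto

theorem lemma2:
  fixes A :: "'a set" and R :: "'r set" and p :: real
    and E :: "'a \<Rightarrow> 'r \<Rightarrow> ('r \<Rightarrow> bool) \<Rightarrow> bool"
    and w u c :: "'a \<Rightarrow> 'r \<Rightarrow> real" and \<alpha> \<beta> :: "'a \<Rightarrow> real"
    and G :: "('a \<times> 'r) set" and a :: 'a
  assumes "finite A" and "finite R"
    and anchor: "anchor_subgraph A R E G"
    and driven: "r_driven A R E"
    and p: "0 < p" "p < 1"
    and u_supp: "{(a', r). a' \<in> A \<and> r \<in> R \<and> u a' r \<noteq> 0} \<subseteq> G"
    and c_def: "\<forall>a'\<in>A. \<forall>r\<in>R. c a' r = of_bool ((a', r) \<in> G)"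
    and w_nz: "\<forall>a'\<in>A. \<forall>r\<in>R. w a' r \<noteq> 0"
    and u_nontriv: "\<forall>a'\<in>A. card {r\<in>R. u a' r \<noteq> 0} > 0"
    and "a \<in> A"
  shows "Cov (bern_design R p) (W_hat R p E w c a) (beta_hat R p E w \<alpha> \<beta> u a) = 0"
proof -
  define S where "S = {r \<in> R. (a, r) \<in> G}"
  define M where "M = bern_design R p"
  define x_S where "x_S T = (\<Sum>r\<in>S. of_bool (T r) * w a r)" for T :: "'r \<Rightarrow> bool"
  define x_N where "x_N T = (\<Sum>r\<in>R - S. of_bool (T r) * of_bool (E a r (\<lambda>s. s = r)) * w a r)"
    for T :: "'r \<Rightarrow> bool"
  define z_S where "z_S T = (\<Sum>r\<in>S. of_bool (T r) * u a r)" for T :: "'r \<Rightarrow> bool"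
  define C where "C = Cov M (exposure R E w a) (zu R u a)"
  have "\<forall>r\<in>R. u a r \<noteq> 0 \<longrightarrow> (a, r) \<in> G"
    using u_supp \<open>a \<in> A\<close> by auto
  then have zu_eq: "zu R u a = z_S"
    using zu_anchored[OF S_def \<open>finite R\<close>] by (simp add: fun_eq_iff z_S_def)
  have "Cov M (W_hat R p E w c a) (beta_hat R p E w \<alpha> \<beta> u a)
      = Cov M (\<lambda>T. (\<Sum>r\<in>S. w a r) + x_N T / p)
          (\<lambda>T. (z_S T - Ex M z_S) * ((\<alpha> a + \<beta> a * x_S T) / C + \<beta> a * x_N T / C))"
  proof (rule Cov_cong)
    fix T assume "T \<in> set_pmf M"
    then have T: "T \<in> treatments R"
      using set_pmf_bern_design[OF \<open>finite R\<close>] by (auto simp: M_def)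
    show "W_hat R p E w c a T = (\<Sum>r\<in>S. w a r) + x_N T / p"
      using W_hat_anchored_split[OF S_def \<open>finite R\<close> anchor driven \<open>a \<in> A\<close> T] c_def \<open>a \<in> A\<close>
      by (simp add: x_N_def)
    have "exposure R E w a T = x_S T + x_N T"
      using exposure_anchored_split[OF S_def \<open>finite R\<close> anchor driven \<open>a \<in> A\<close> T]
      by (simp add: x_S_def x_N_def)
    then show "beta_hat R p E w \<alpha> \<beta> u a T
        = (z_S T - Ex M z_S) * ((\<alpha> a + \<beta> a * x_S T) / C + \<beta> a * x_N T / C)"
      unfolding beta_hat_def outcome_def zu_eq C_def M_def by (simp add: divide_inverse algebra_simps)
  qed
  also have "\<dots> = 0"
  proof -
    have "S \<subseteq> R"
      by (auto simp: S_def)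
    moreover have "depends_only_on (R - S) (\<lambda>T. (\<Sum>r\<in>S. w a r) + x_N T / p)"
      "depends_only_on S z_S" "depends_only_on S (\<lambda>T. (\<alpha> a + \<beta> a * x_S T) / C)"
      "depends_only_on (R - S) (\<lambda>T. \<beta> a * x_N T / C)"
      by (simp_all add: depends_only_on_def x_S_def x_N_def z_S_def)
    ultimately show ?thesis
      unfolding M_def bern_design_def by (rule Cov_Pi_pmf_blocks_eq_0[OF \<open>finite R\<close>])
  qed
  finally show ?thesis
    by (simp add: M_def)
qed

end
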